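(* Let $\epsilon>0$, and let $\gamma=O(1/\epsilon)$ be chosen sufficiently large (so that, for all $p,q\in M$, the path that climbs the net tree from $p$ to $p^{(i)}$, takes the cross edge to $q^{(i)}$ and descends to $q$, where $i$ is the smallest level at which $p^{(i)},q^{(i)}$ are joined by a cross edge, has length at most $(1+\epsilon)d(p,q)$). Then the routing algorithm described below has routing ratio $1+\epsilon$ and diameter $O(\log n)$: for all $p,q\in M$, routing from $p$ to $q$ reaches $q$ after traversing $O(\log n)$ edges of the spanner, and the total length of the traversed path is at most $(1+\epsilon)d(p,q)$.
   Context: $(M,d)$ is an $n$-point metric of constant doubling dimension, minimum interpoint distance $1$, diameter $D$; $\log$ is base $2$. Nested sets $M=N_0\supseteq N_1\supseteq\cdots\supseteq N_{\log D}$ are computed, $N_i$ a $2^i$-net of $N_{i-1}$ (distinct points of $N_i$ at distance $>2^i$; every point of $N_{i-1}$ within $2^i$ of $N_i$), the top set a singleton. Net tree: one level-$i$ node per point of $N_i$, with representative $rep(\cdot)$ that point; the parent of a level-$i$ node $v$ is a level-$(i+1)$ node $w$ with $d(rep(v),rep(w))\le 2^{i+1}$; leaves correspond to points of $M$; $p^{(i)}$ is the level-$i$ ancestor of leaf $p$; tree edge $(u,w)$ has weight $d(rep(u),rep(w))$. Fix $\gamma>4$; a cross edge joins level-$i$ nodes $u,w$ whenever $d(rep(u),rep(w))\le\gamma 2^i$. Light subtrees are the subtrees of the net tree of height $\log(D/n)$ (rooted at nodes of level $\log(D/n)$ and containing all their descendants). On each light subtree, viewed as a weighted rooted tree, the Solomon–Elkin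 tree-metric 1-spanner with a constant parameter $k\ge4$ is built: recursively, a set of at most $k+1$ cut vertices $C_R$ of a subtree $R$ is chosen, all pairs in $C_R$ are joined by shortcut edges (weighted by tree distance), and the construction recurses on the components of $R$ minus $C_R$. Within a light subtree, the "1-spanner routing algorithm" is a local routing algorithm on this 1-spanner which always moves along shortcut or tree edges, visits vertices of the tree path to its target in order (so its path length equals the tree distance), and reaches its target within $O(\log n)$ hops. The spanner $H$ on $M$ is induced by all these edges via representatives. A $(1+\delta)$-approximate distance labelling gives $\tilde d(p,q)$ with $d(p,q)\le\tilde d(p,q)\le(1+\delta)d(p,q)$ for a constant $\delta>0$. Routing from $p$ to $q$ (current net-tree node $u$, destination leaf $v=q$): Initialization: set target level $i=\lfloor\log(\tilde d(p,q)/((1+\delta)(\gamma+4)))\rfloor$, start at the leaf $p$. Ascending (while $u$ is below level $i$): if $u$ is in a light subtree, use the 1-spanner routing algorithm in that light subtree to move towards the level-$i$ ancestor of $u$; otherwise move to the parent of $u$. Searching (at level $\ge i$): if $u$ has a cross edge to an ancestor of $v$, move to that ancestor; otherwise move to the parent of $u$. Descending (once $u$ is an ancestor of $v$): if $u$ is in a light subtree, use the 1-spanner routing algorithm to move towards $v$; otherwise move to the child of $u$ that is an ancestor of $v$. The routed path length is the sum of $d(rep(\cdot),rep(\cdot))$ over traversed edges. *)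

theory Defs
  imports Complex_Main
begin

type_synonym 'a node = "nat \<times> 'a"   \<comment> \<open>(level, representative)\<close>

definition metric_on :: "'a set \<Rightarrow> ('a \<Rightarrow> 'a \<Rightarrow> real) \<Rightarrow> bool" where
  "metric_on M d \<longleftrightarrow>
     (\<forall>x\<in>M. \<forall>y\<in>M. d x y = d y x \<and> 0 \<le> d x y \<and> (d x y = 0 \<longleftrightarrow> x = y)) \<and>
     (\<forall>x\<in>M. \<forall>y\<in>M. \<forall>z\<in>M. d x z \<le> d x y + d y z)"

definition min_dist_one :: "'a set \<Rightarrow> ('a \<Rightarrow> 'a \<Rightarrow> real) \<Rightarrow> bool" where
  "min_dist_one M d \<longleftrightarrow> (\<forall>x\<in>M. \<forall>y\<in>M. x \<noteq> y \<longrightarrow> 1 \<le> d x y)"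

definition doubling :: "'a set \<Rightarrow> ('a \<Rightarrow> 'a \<Rightarrow> real) \<Rightarrow> nat \<Rightarrow> bool" where
  "doubling M d dd \<longleftrightarrow>
     (\<forall>x\<in>M. \<forall>r>0. \<exists>F. F \<subseteq> M \<and> finite F \<and> card F \<le> 2 ^ dd \<and>
        {y\<in>M. d x y \<le> 2 * r} \<subseteq> (\<Union>c\<in>F. {y\<in>M. d c y \<le> r}))"

definition diam :: "'a set \<Rightarrow> ('a \<Rightarrow> 'a \<Rightarrow> real) \<Rightarrow> real" where
  "diam M d = Max {d x y | x y. x \<in> M \<and> y \<in> M}"

definition is_net_seq :: "'a set \<Rightarrow> ('a \<Rightarrow> 'a \<Rightarrow> real) \<Rightarrow> (nat \<Rightarrow> 'a set) \<Rightarrow> nat \<Rightarrow> bool" where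
  "is_net_seq M d N L \<longleftrightarrow> N 0 = M \<and>
     (\<forall>i<L. N (Suc i) \<subseteq> N i \<and>
        (\<forall>x\<in>N (Suc i). \<forall>y\<in>N (Suc i). x \<noteq> y \<longrightarrow> d x y > 2 ^ Suc i) \<and>
        (\<forall>x\<in>N i. \<exists>y\<in>N (Suc i). d x y \<le> 2 ^ Suc i)) \<and>
     (\<exists>r. N L = {r})"

definition is_parent_fun :: "(nat \<Rightarrow> 'a set) \<Rightarrow> nat \<Rightarrow> ('a \<Rightarrow> 'a \<Rightarrow> real) \<Rightarrow> (nat \<Rightarrow> 'a \<Rightarrow> 'a) \<Rightarrow> bool" where
  "is_parent_fun N L d par \<longleftrightarrow>
     (\<forall>i<L. \<forall>x\<in>N i. par i x \<in> N (Suc i) \<and> d x (par i x) \<le> 2 ^ Suc i)"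

text \<open>Representative of the ancestor k levels above the level-l node with representative x.\<close>
fun up :: "(nat \<Rightarrow> 'a \<Rightarrow> 'a) \<Rightarrow> nat \<Rightarrow> 'a \<Rightarrow> nat \<Rightarrow> 'a" where
  "up par l x 0 = x"
| "up par l x (Suc k) = par (l + k) (up par l x k)"

definition nodes :: "(nat \<Rightarrow> 'a set) \<Rightarrow> nat \<Rightarrow> 'a node set" where
  "nodes N L = {(l, x). l \<le> L \<and> x \<in> N l}"

definition anc_set :: "(nat \<Rightarrow> 'a \<Rightarrow> 'a) \<Rightarrow> nat \<Rightarrow> 'a node \<Rightarrow> 'a node set" where
  "anc_set par L u = {(fst u + k, up par (fst u) (snd u) k) | k. fst u + k \<le> L}"

definition tree_path :: "(nat \<Rightarrow> 'a \<Rightarrow> 'a) \<Rightarrow> nat \<Rightarrow> 'a node \<Rightarrow> 'a node \<Rightarrow> 'a node set" where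
  "tree_path par L u t =
     (anc_set par L u - anc_set par L t) \<union> (anc_set par L t - anc_set par L u) \<union>
     {w \<in> anc_set par L u \<inter> anc_set par L t.
        \<forall>w'\<in>anc_set par L u \<inter> anc_set par L t. fst w \<le> fst w'}"

definition parent_node :: "(nat \<Rightarrow> 'a \<Rightarrow> 'a) \<Rightarrow> 'a node \<Rightarrow> 'a node" where
  "parent_node par u = (Suc (fst u), par (fst u) (snd u))"

definition tree_edge :: "(nat \<Rightarrow> 'a \<Rightarrow> 'a) \<Rightarrow> 'a node \<Rightarrow> 'a node \<Rightarrow> bool" where
  "tree_edge par u w \<longleftrightarrow> w = parent_node par u \<or> u = parent_node par w"

definition cross_edge :: "('a \<Rightarrow> 'a \<Rightarrow> real) \<Rightarrow> real \<Rightarrow> 'a node \<Rightarrow> 'a node \<Rightarrow> bool" where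
  "cross_edge d \<gamma> u w \<longleftrightarrow> fst u = fst w \<and> u \<noteq> w \<and> d (snd u) (snd w) \<le> \<gamma> * 2 ^ fst u"

text \<open>Root level of the light subtrees: log (D/n).\<close>
definition light_level :: "'a set \<Rightarrow> ('a \<Rightarrow> 'a \<Rightarrow> real) \<Rightarrow> nat" where
  "light_level M d = nat \<lfloor>log 2 (diam M d / real (card M))\<rfloor>"

definition same_light :: "(nat \<Rightarrow> 'a \<Rightarrow> 'a) \<Rightarrow> nat \<Rightarrow> 'a node \<Rightarrow> 'a node \<Rightarrow> bool" where
  "same_light par h u t \<longleftrightarrow> fst u \<le> h \<and> fst t \<le> h \<and>
     up par (fst u) (snd u) (h - fst u) = up par (fst t) (snd t) (h - fst t)"

definition shortcut_set :: "(nat \<Rightarrow> 'a set) \<Rightarrow> nat \<Rightarrow> (nat \<Rightarrow> 'a \<Rightarrow> 'a) \<Rightarrow> nat \<Rightarrow> ('a node \<times> 'a node) set \<Rightarrow> bool" where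
  "shortcut_set N L par h S \<longleftrightarrow>
     (\<forall>(u, w)\<in>S. u \<in> nodes N L \<and> w \<in> nodes N L \<and> same_light par h u w)"

text \<open>The 1-spanner routing algorithm inside light subtrees: sr u t is the next hop from u
  towards t; it moves along tree or shortcut edges, visits the vertices of the tree path
  to t in order, and reaches t within c * log n hops.\<close>
definition spanner_router ::
  "('a node \<Rightarrow> 'a node \<Rightarrow> 'a node) \<Rightarrow> ('a node \<times> 'a node) set \<Rightarrow> (nat \<Rightarrow> 'a set) \<Rightarrow> nat \<Rightarrow>
   (nat \<Rightarrow> 'a \<Rightarrow> 'a) \<Rightarrow> nat \<Rightarrow> real \<Rightarrow> nat \<Rightarrow> bool" where
  "spanner_router sr S N L par h c n \<longleftrightarrow>
     (\<forall>u\<in>nodes N L. \<forall>t\<in>nodes N L. same_light par h u t \<and> u \<noteq> t \<longrightarrow>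
        sr u t \<in> tree_path par L u t \<and> sr u t \<noteq> u \<and>
        tree_path par L (sr u t) t \<subseteq> tree_path par L u t \<and>
        (tree_edge par u (sr u t) \<or> (u, sr u t) \<in> S \<or> (sr u t, u) \<in> S)) \<and>
     (\<forall>u\<in>nodes N L. \<forall>t\<in>nodes N L. same_light par h u t \<longrightarrow>
        (\<exists>k. real k \<le> c * log 2 (real n) \<and> ((\<lambda>w. sr w t) ^^ k) u = t))"

definition approx_labelling :: "'a set \<Rightarrow> ('a \<Rightarrow> 'a \<Rightarrow> real) \<Rightarrow> real \<Rightarrow> ('a \<Rightarrow> 'a \<Rightarrow> real) \<Rightarrow> bool" where
  "approx_labelling M d \<delta> dt \<longleftrightarrow>
     (\<forall>p\<in>M. \<forall>q\<in>M. d p q \<le> dt p q \<and> dt p q \<le> (1 + \<delta>) * d p q)"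

definition gamma_ok :: "'a set \<Rightarrow> ('a \<Rightarrow> 'a \<Rightarrow> real) \<Rightarrow> (nat \<Rightarrow> 'a \<Rightarrow> 'a) \<Rightarrow> real \<Rightarrow> real \<Rightarrow> bool" where
  "gamma_ok M d par \<gamma> \<epsilon> \<longleftrightarrow>
     (\<forall>p\<in>M. \<forall>q\<in>M.
        (let i0 = (LEAST i. d (up par 0 p i) (up par 0 q i) \<le> \<gamma> * 2 ^ i) in
          (\<Sum>j<i0. d (up par 0 p j) (up par 0 p (Suc j))) + d (up par 0 p i0) (up par 0 q i0)
          + (\<Sum>j<i0. d (up par 0 q j) (up par 0 q (Suc j))) \<le> (1 + \<epsilon>) * d p q))"

datatype phase = Asc | Srch | Desc

definition target_level :: "('a \<Rightarrow> 'a \<Rightarrow> real) \<Rightarrow> real \<Rightarrow> real \<Rightarrow> 'a \<Rightarrow> 'a \<Rightarrow> int" where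
  "target_level dt \<delta> \<gamma> p q = \<lfloor>log 2 (dt p q / ((1 + \<delta>) * (\<gamma> + 4)))\<rfloor>"

definition ascend_step :: "(nat \<Rightarrow> 'a \<Rightarrow> 'a) \<Rightarrow> ('a node \<Rightarrow> 'a node \<Rightarrow> 'a node) \<Rightarrow> nat \<Rightarrow> int \<Rightarrow> 'a node \<Rightarrow> 'a node" where
  "ascend_step par sr h i u =
     (if fst u < h then
        (let m = min (nat i) h in sr u (m, up par (fst u) (snd u) (m - fst u)))
      else parent_node par u)"

definition search_step :: "('a \<Rightarrow> 'a \<Rightarrow> real) \<Rightarrow> (nat \<Rightarrow> 'a \<Rightarrow> 'a) \<Rightarrow> real \<Rightarrow> 'a \<Rightarrow> 'a node \<Rightarrow> 'a node" where
  "search_step d par \<gamma> q u =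
     (let a = (fst u, up par 0 q (fst u)) in
        if cross_edge d \<gamma> u a then a else parent_node par u)"

definition descend_step :: "(nat \<Rightarrow> 'a \<Rightarrow> 'a) \<Rightarrow> ('a node \<Rightarrow> 'a node \<Rightarrow> 'a node) \<Rightarrow> nat \<Rightarrow> 'a \<Rightarrow> 'a node \<Rightarrow> 'a node" where
  "descend_step par sr h q u =
     (if fst u \<le> h then sr u (0, q) else (fst u - 1, up par 0 q (fst u - 1)))"

definition is_anc_of :: "(nat \<Rightarrow> 'a \<Rightarrow> 'a) \<Rightarrow> 'a \<Rightarrow> 'a node \<Rightarrow> bool" where
  "is_anc_of par q u \<longleftrightarrow> snd u = up par 0 q (fst u)"

definition route_step ::
  "('a \<Rightarrow> 'a \<Rightarrow> real) \<Rightarrow> (nat \<Rightarrow> 'a \<Rightarrow> 'a) \<Rightarrow> ('a node \<Rightarrow> 'a node \<Rightarrow> 'a node) \<Rightarrow> real \<Rightarrow> nat \<Rightarrow> int \<Rightarrow> 'a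
   \<Rightarrow> phase \<times> 'a node \<Rightarrow> phase \<times> 'a node" where
  "route_step d par sr \<gamma> h i q s =
     (let ph = fst s; u = snd s;
          srch = (if is_anc_of par q u then (Desc, descend_step par sr h q u)
                  else (Srch, search_step d par \<gamma> q u))
      in if u = (0, q) then s
         else (case ph of
                 Asc \<Rightarrow> (if int (fst u) < i then (Asc, ascend_step par sr h i u) else srch)
               | Srch \<Rightarrow> srch
               | Desc \<Rightarrow> (Desc, descend_step par sr h q u)))"

definition route_state ::
  "'a set \<Rightarrow> ('a \<Rightarrow> 'a \<Rightarrow> real) \<Rightarrow> (nat \<Rightarrow> 'a \<Rightarrow> 'a) \<Rightarrow> ('a node \<Rightarrow> 'a node \<Rightarrow> 'a node) \<Rightarrow>
   ('a \<Rightarrow> 'a \<Rightarrow> real) \<Rightarrow> real \<Rightarrow> real \<Rightarrow> 'a \<Rightarrow> 'a \<Rightarrow> nat \<Rightarrow> phase \<times> 'a node" where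
  "route_state M d par sr dt \<delta> \<gamma> p q m =
     (route_step d par sr \<gamma> (light_level M d) (target_level dt \<delta> \<gamma> p q) q ^^ m) (Asc, (0, p))"

definition spanner_edge :: "('a \<Rightarrow> 'a \<Rightarrow> real) \<Rightarrow> (nat \<Rightarrow> 'a \<Rightarrow> 'a) \<Rightarrow> real \<Rightarrow> ('a node \<times> 'a node) set \<Rightarrow> 'a node \<Rightarrow> 'a node \<Rightarrow> bool" where
  "spanner_edge d par \<gamma> S u w \<longleftrightarrow>
     tree_edge par u w \<or> cross_edge d \<gamma> u w \<or> (u, w) \<in> S \<or> (w, u) \<in> S"

end

theory Submission
  imports Defs
begin

text \<open>Let i0 be the least level at which the ancestors p^(i0) and q^(i0) are joined by a cross
  edge (or coincide). Since d(p,q) and d(p^(j),q^(j)) differ by less than 4 * 2^j, the approximate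
  distance puts the target level i into the window i <= i0 <= i + K0, with K0 depending only on
  delta and gamma. Hence the router climbs the ancestor chain of p up to level i0 (below i0 the
  search phase finds no cross edge), takes the cross edge to q^(i0) and descends the ancestor chain
  of q; shortcuts only skip parts of these chains, so by the triangle inequality the routed length
  is at most that of the reference path of gamma_ok. The hops are at most c log n for each use of
  the 1-spanner router plus i0 - min i h tree steps, where h = log (D/n) is the light level; since
  d(p,q) <= D gives i <= h + 1 + log n, this is O(log n). Both bounds are obtained at once from a
  rank and a potential (the remaining length of the reference path) that both decrease along
  every step.\<close>

lemma funpow_reaches_with_potential:
  fixes F :: "'s \<Rightarrow> 's" and rank :: "'s \<Rightarrow> nat" and pot :: "'s \<Rightarrow> real"
  assumes step: "\<And>s. I s \<Longrightarrow> \<not> final s \<Longrightarrow>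
      I (F s) \<and> rank (F s) < rank s \<and> cost s (F s) \<le> pot s - pot (F s) \<and> E s (F s)"
    and "I s0"
  shows "\<exists>m \<le> rank s0. final ((F^^m) s0) \<and> (\<forall>j<m. E ((F^^j) s0) ((F^^Suc j) s0)) \<and>
     (\<Sum>j<m. cost ((F^^j) s0) ((F^^Suc j) s0)) \<le> pot s0 - pot ((F^^m) s0)"
  using \<open>I s0\<close>
proof (induction "rank s0" arbitrary: s0 rule: less_induct)
  case less
  show ?case
  proof (cases "final s0")
    case True
    then show ?thesis by (intro exI[of _ 0]) auto
  next
    case False
    with step[OF less.prems] have st: "I (F s0)" "rank (F s0) < rank s0"
      "cost s0 (F s0) \<le> pot s0 - pot (F s0)" "E s0 (F s0)" by auto
    from less.hyps[OF st(2,1)] obtain m where m: "m \<le> rank (F s0)" "final ((F^^m) (F s0))"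
      "\<forall>j<m. E ((F^^j) (F s0)) ((F^^Suc j) (F s0))"
      "(\<Sum>j<m. cost ((F^^j) (F s0)) ((F^^Suc j) (F s0))) \<le> pot (F s0) - pot ((F^^m) (F s0))"
      by blast
    have shift: "\<And>j. (F^^Suc j) s0 = (F^^j) (F s0)"
      by (simp add: funpow_Suc_right del: funpow.simps)
    show ?thesis
    proof (intro exI[of _ "Suc m"] conjI allI impI)
      show "Suc m \<le> rank s0" using m(1) st(2) by simp
      show "final ((F^^Suc m) s0)" using m(2) shift by simp
      fix j assume "j < Suc m"
      then show "E ((F^^j) s0) ((F^^Suc j) s0)"
        using m(3) st(4) shift by (cases j) (auto simp del: funpow.simps)
    next
      have "(\<Sum>j<Suc m. cost ((F^^j) s0) ((F^^Suc j) s0)) =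
          cost s0 (F s0) + (\<Sum>j<m. cost ((F^^j) (F s0)) ((F^^Suc j) (F s0)))"
        by (subst sum.lessThan_Suc_shift) (simp add: shift del: funpow.simps)
      also have "\<dots> \<le> pot s0 - pot ((F^^Suc m) s0)"
        using m(4) st(3) shift[of m] by simp
      finally show "(\<Sum>j<Suc m. cost ((F^^j) s0) ((F^^Suc j) s0)) \<le> pot s0 - pot ((F^^Suc m) s0)" .
    qed
  qed
qed

definition steps_to :: "('b \<Rightarrow> 'b) \<Rightarrow> 'b \<Rightarrow> 'b \<Rightarrow> nat" where
  "steps_to g t w = (LEAST k. (g ^^ k) w = t)"

lemma steps_to_le: "(g ^^ k) w = t \<Longrightarrow> steps_to g t w \<le> k"
  unfolding steps_to_def by (rule Least_le)

lemma steps_to_less: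
  assumes "(g ^^ k) w = t" "w \<noteq> t"
  shows "steps_to g t (g w) < steps_to g t w"
proof -
  have reach: "(g ^^ steps_to g t w) w = t"
    unfolding steps_to_def by (rule LeastI[of _ k]) (rule assms(1))
  then obtain k' where k': "steps_to g t w = Suc k'"
    using assms(2) by (cases "steps_to g t w") auto
  have "(g ^^ k') (g w) = t" using reach k' by (simp add: funpow_Suc_right del: funpow.simps)
  then have "steps_to g t (g w) \<le> k'" by (rule steps_to_le)
  then show ?thesis using k' by simp
qed

lemma two_pow_nat_floor_log_le:
  fixes x :: real
  assumes "0 < x" "0 \<le> \<lfloor>log 2 x\<rfloor>"
  shows "2 ^ nat \<lfloor>log 2 x\<rfloor> \<le> x"
proof -
  have "real (nat \<lfloor>log 2 x\<rfloor>) \<le> log 2 x" using assms(2) by linarith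
  then show ?thesis using assms(1) by (simp add: le_log_iff powr_realpow)
qed

lemma less_two_pow_Suc_nat_floor_log:
  fixes x :: real
  assumes "0 < x"
  shows "x < 2 ^ Suc (nat \<lfloor>log 2 x\<rfloor>)"
proof -
  have "log 2 x < real (Suc (nat \<lfloor>log 2 x\<rfloor>))" by linarith
  then show ?thesis using assms by (simp add: log_less_iff powr_realpow del: of_nat_Suc)
qed

lemma dist_le_diam: "finite M \<Longrightarrow> x \<in> M \<Longrightarrow> y \<in> M \<Longrightarrow> d x y \<le> diam M d"
  unfolding diam_def by (intro Max_ge finite_image_set2) auto

lemma up_0_add: "up par l (up par 0 x l) k = up par 0 x (l + k)"
  by (induction k) auto

definition anc_node :: "(nat \<Rightarrow> 'a \<Rightarrow> 'a) \<Rightarrow> 'a \<Rightarrow> nat \<Rightarrow> 'a node" where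
  "anc_node par x l = (l, up par 0 x l)"

lemma fst_anc_node [simp]: "fst (anc_node par x l) = l"
  and snd_anc_node [simp]: "snd (anc_node par x l) = up par 0 x l"
  by (simp_all add: anc_node_def)

lemma anc_node_0: "anc_node par x 0 = (0, x)"
  by (simp add: anc_node_def)

lemma anc_node_eq_iff: "anc_node par x j = anc_node par y k \<longleftrightarrow> j = k \<and> up par 0 x j = up par 0 y k"
  by (auto simp: anc_node_def)

lemma parent_node_anc_node: "parent_node par (anc_node par x l) = anc_node par x (Suc l)"
  by (simp add: parent_node_def anc_node_def)

lemma anc_set_anc_node: "anc_set par L (anc_node par x l) = {anc_node par x j | j. l \<le> j \<and> j \<le> L}"
proof -
  have "anc_set par L (anc_node par x l) = {anc_node par x (l + k) | k. l + k \<le> L}"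
    unfolding anc_set_def anc_node_def by (simp add: up_0_add)
  also have "\<dots> = {anc_node par x j | j. l \<le> j \<and> j \<le> L}"
    by (metis (no_types, opaque_lifting) le_add1 le_add_diff_inverse)
  finally show ?thesis .
qed

lemma tree_path_anc_nodes:
  assumes "l \<le> L" "m \<le> L"
  shows "tree_path par L (anc_node par x l) (anc_node par x m) \<subseteq>
    {anc_node par x j | j. min l m \<le> j \<and> j \<le> max l m}"
proof
  let ?A = "\<lambda>l. {anc_node par x j | j. l \<le> j \<and> j \<le> L}"
  fix w assume w: "w \<in> tree_path par L (anc_node par x l) (anc_node par x m)"
  then obtain j where j: "w = anc_node par x j" "min l m \<le> j" "j \<le> L"
    unfolding tree_path_def anc_set_anc_node by auto
  have "j \<le> max l m"
  proof (rule ccontr)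
    assume above: "\<not> j \<le> max l m"
    then have "w \<in> ?A l \<inter> ?A m" using j by auto
    then have "\<forall>w'\<in>?A l \<inter> ?A m. fst w \<le> fst w'"
      using w unfolding tree_path_def anc_set_anc_node by blast
    moreover have "anc_node par x (max l m) \<in> ?A l \<inter> ?A m" using assms by auto
    ultimately have "fst w \<le> fst (anc_node par x (max l m))" by blast
    with above j show False by simp
  qed
  with j show "w \<in> {anc_node par x j | j. min l m \<le> j \<and> j \<le> max l m}" by blast
qed

lemma same_light_anc_nodes: "l \<le> h \<Longrightarrow> m \<le> h \<Longrightarrow> same_light par h (anc_node par x l) (anc_node par x m)"
  unfolding same_light_def anc_node_def by (simp add: up_0_add)

lemma spanner_edge_anc_node_Suc:
  "spanner_edge d par \<gamma> S (anc_node par x l) (anc_node par x (Suc l))"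
  "spanner_edge d par \<gamma> S (anc_node par x (Suc l)) (anc_node par x l)"
  by (simp_all add: spanner_edge_def tree_edge_def parent_node_anc_node)

locale net_tree =
  fixes M :: "'a set" and d :: "'a \<Rightarrow> 'a \<Rightarrow> real" and N :: "nat \<Rightarrow> 'a set" and L :: nat
    and par :: "nat \<Rightarrow> 'a \<Rightarrow> 'a"
  assumes metric: "metric_on M d" and net: "is_net_seq M d N L" and parent: "is_parent_fun N L d par"
begin

lemma d_sym: "x \<in> M \<Longrightarrow> y \<in> M \<Longrightarrow> d x y = d y x"
  and d_nonneg: "x \<in> M \<Longrightarrow> y \<in> M \<Longrightarrow> 0 \<le> d x y"
  and d_eq_0_iff: "x \<in> M \<Longrightarrow> y \<in> M \<Longrightarrow> d x y = 0 \<longleftrightarrow> x = y"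
  and d_triangle: "x \<in> M \<Longrightarrow> y \<in> M \<Longrightarrow> z \<in> M \<Longrightarrow> d x z \<le> d x y + d y z"
  using metric unfolding metric_on_def by blast+

lemma d_self: "x \<in> M \<Longrightarrow> d x x = 0"
  using d_eq_0_iff by blast

lemma net_subset: "i \<le> L \<Longrightarrow> N i \<subseteq> M"
proof (induction i)
  case 0
  then show ?case using net by (simp add: is_net_seq_def)
next
  case (Suc i)
  then have "N (Suc i) \<subseteq> N i" using net unfolding is_net_seq_def by auto
  then show ?case using Suc by auto
qed

lemma up_in_net: "x \<in> M \<Longrightarrow> j \<le> L \<Longrightarrow> up par 0 x j \<in> N j"
proof (induction j)
  case 0
  then show ?case using net by (simp add: is_net_seq_def)
next
  case (Suc j)
  then show ?case using parent unfolding is_parent_fun_def by auto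
qed

lemma up_in_M: "x \<in> M \<Longrightarrow> j \<le> L \<Longrightarrow> up par 0 x j \<in> M"
  using up_in_net net_subset by blast

lemma anc_node_in_nodes: "x \<in> M \<Longrightarrow> l \<le> L \<Longrightarrow> anc_node par x l \<in> nodes N L"
  using up_in_net by (auto simp: nodes_def anc_node_def)

lemma up_top_eq: "x \<in> M \<Longrightarrow> y \<in> M \<Longrightarrow> up par 0 x L = up par 0 y L"
  using net up_in_net[of x L] up_in_net[of y L] unfolding is_net_seq_def by auto

lemma dist_up_Suc: "x \<in> M \<Longrightarrow> j < L \<Longrightarrow> d (up par 0 x j) (up par 0 x (Suc j)) \<le> 2 ^ Suc j"
  using parent up_in_net[of x j] unfolding is_parent_fun_def by auto

lemma dist_up_leaf: "x \<in> M \<Longrightarrow> j \<le> L \<Longrightarrow> d (up par 0 x j) x \<le> 2 ^ (j + 1) - 2"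
proof (induction j)
  case 0
  then show ?case by (simp add: d_self)
next
  case (Suc j)
  have "d (up par 0 x (Suc j)) x \<le> d (up par 0 x (Suc j)) (up par 0 x j) + d (up par 0 x j) x"
    using Suc.prems by (intro d_triangle up_in_M) auto
  also have "d (up par 0 x (Suc j)) (up par 0 x j) = d (up par 0 x j) (up par 0 x (Suc j))"
    using Suc.prems by (intro d_sym up_in_M) auto
  also have "\<dots> \<le> 2 ^ Suc j" using Suc.prems by (intro dist_up_Suc) auto
  finally show ?case using Suc by simp
qed

lemma dist_le_dist_up:
  assumes "x \<in> M" "y \<in> M" "j \<le> L"
  shows "d x y \<le> d (up par 0 x j) (up par 0 y j) + (4 * 2 ^ j - 4)"
proof -
  have in_M: "up par 0 x j \<in> M" "up par 0 y j \<in> M" using up_in_M assms by auto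
  have "d x y \<le> d x (up par 0 x j) + d (up par 0 x j) (up par 0 y j) + d (up par 0 y j) y"
    using in_M assms d_triangle by (meson add_mono_thms_linordered_semiring(3) order_trans)
  then show ?thesis using dist_up_leaf[OF assms(1,3)] dist_up_leaf[OF assms(2,3)]
      d_sym[OF in_M(1) assms(1)] by simp
qed

lemma dist_up_le_dist:
  assumes "x \<in> M" "y \<in> M" "j \<le> L"
  shows "d (up par 0 x j) (up par 0 y j) \<le> d x y + (4 * 2 ^ j - 4)"
proof -
  have in_M: "up par 0 x j \<in> M" "up par 0 y j \<in> M" using up_in_M assms by auto
  have "d (up par 0 x j) (up par 0 y j) \<le> d (up par 0 x j) x + d x y + d y (up par 0 y j)"
    using in_M assms d_triangle by (meson add_mono_thms_linordered_semiring(3) order_trans)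
  then show ?thesis using dist_up_leaf[OF assms(1,3)] dist_up_leaf[OF assms(2,3)]
      d_sym[OF in_M(2) assms(2)] by simp
qed

definition climb_length :: "'a \<Rightarrow> nat \<Rightarrow> nat \<Rightarrow> real" where
  "climb_length x l l' = (\<Sum>j\<in>{l..<l'}. d (up par 0 x j) (up par 0 x (Suc j)))"

lemma climb_length_split: "l \<le> j \<Longrightarrow> j \<le> l' \<Longrightarrow>
    climb_length x l l' = climb_length x l j + climb_length x j l'"
  unfolding climb_length_def by (rule sum.atLeastLessThan_concat[symmetric])

lemma climb_length_Suc: "climb_length x l (Suc l) = d (up par 0 x l) (up par 0 x (Suc l))"
  unfolding climb_length_def by (simp del: up.simps)

lemma dist_up_le_climb_length:
  "x \<in> M \<Longrightarrow> l \<le> l' \<Longrightarrow> l' \<le> L \<Longrightarrow> d (up par 0 x l) (up par 0 x l') \<le> climb_length x l l'"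
proof (induction l')
  case 0
  then show ?case by (simp add: climb_length_def d_self up_in_M)
next
  case (Suc l')
  show ?case
  proof (cases "l = Suc l'")
    case True
    then show ?thesis using Suc.prems by (simp add: climb_length_def d_self up_in_M del: up.simps)
  next
    case False
    then have "l \<le> l'" using Suc.prems by simp
    have "d (up par 0 x l) (up par 0 x (Suc l')) \<le>
        d (up par 0 x l) (up par 0 x l') + d (up par 0 x l') (up par 0 x (Suc l'))"
      using Suc.prems by (intro d_triangle up_in_M) auto
    also have "\<dots> \<le> climb_length x l l' + climb_length x l' (Suc l')"
      using Suc \<open>l \<le> l'\<close> by (simp add: climb_length_Suc del: up.simps)
    also have "\<dots> = climb_length x l (Suc l')"
      using \<open>l \<le> l'\<close> by (simp add: climb_length_split[of l l' "Suc l'"])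
    finally show ?thesis .
  qed
qed

end

locale light_router = net_tree M d N L par
  for M :: "'a set" and d N L par +
  fixes sr :: "'a node \<Rightarrow> 'a node \<Rightarrow> 'a node" and S :: "('a node \<times> 'a node) set" and c :: real
  assumes router: "spanner_router sr S N L par (light_level M d) c (card M)"
begin

abbreviation "h_light \<equiv> light_level M d"

lemma router_next_hop:
  assumes "u \<in> nodes N L" "t \<in> nodes N L" "same_light par h_light u t" "u \<noteq> t"
  shows "sr u t \<in> tree_path par L u t" "sr u t \<noteq> u"
    "tree_edge par u (sr u t) \<or> (u, sr u t) \<in> S \<or> (sr u t, u) \<in> S"
proof -
  have "\<forall>u\<in>nodes N L. \<forall>t\<in>nodes N L. same_light par h_light u t \<and> u \<noteq> t \<longrightarrow>
      sr u t \<in> tree_path par L u t \<and> sr u t \<noteq> u \<and> tree_path par L (sr u t) t \<subseteq> tree_path par L u t \<and>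
      (tree_edge par u (sr u t) \<or> (u, sr u t) \<in> S \<or> (sr u t, u) \<in> S)"
    using router unfolding spanner_router_def by (rule conjunct1)
  with assms show "sr u t \<in> tree_path par L u t" "sr u t \<noteq> u"
    "tree_edge par u (sr u t) \<or> (u, sr u t) \<in> S \<or> (sr u t, u) \<in> S"
    by simp_all
qed

lemma router_hop_count:
  assumes "u \<in> nodes N L" "t \<in> nodes N L" "same_light par h_light u t"
  shows "\<exists>k. real k \<le> c * log 2 (real (card M)) \<and> ((\<lambda>w. sr w t) ^^ k) u = t"
proof -
  have "\<forall>u\<in>nodes N L. \<forall>t\<in>nodes N L. same_light par h_light u t \<longrightarrow>
      (\<exists>k. real k \<le> c * log 2 (real (card M)) \<and> ((\<lambda>w. sr w t) ^^ k) u = t)"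
    using router unfolding spanner_router_def by (rule conjunct2)
  with assms show ?thesis by simp
qed

lemma router_step_on_chain:
  assumes "x \<in> M" "l \<le> L" "m \<le> L" "l \<le> h_light" "m \<le> h_light" "l \<noteq> m"
  shows "\<exists>j. sr (anc_node par x l) (anc_node par x m) = anc_node par x j \<and>
    min l m \<le> j \<and> j \<le> max l m \<and> j \<noteq> l \<and> spanner_edge d par \<gamma> S (anc_node par x l) (anc_node par x j)"
proof -
  let ?u = "anc_node par x l" and ?t = "anc_node par x m"
  have "?u \<noteq> ?t" using assms(6) by (simp add: anc_node_eq_iff)
  note hop = router_next_hop[OF anc_node_in_nodes[OF assms(1,2)] anc_node_in_nodes[OF assms(1,3)]
      same_light_anc_nodes[OF assms(4,5)] this]
  have "sr ?u ?t \<in> {anc_node par x j | j. min l m \<le> j \<and> j \<le> max l m}"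
    using tree_path_anc_nodes[OF assms(2,3)] hop(1) by (rule subsetD)
  then obtain j where j: "sr ?u ?t = anc_node par x j" "min l m \<le> j" "j \<le> max l m"
    by blast
  have "j \<noteq> l" using hop(2) j(1) by auto
  moreover have "spanner_edge d par \<gamma> S ?u (anc_node par x j)"
    using hop(3) unfolding j(1) spanner_edge_def by blast
  ultimately show ?thesis using j by blast
qed

lemma router_steps_to_le:
  assumes "x \<in> M" "l \<le> L" "m \<le> L" "l \<le> h_light" "m \<le> h_light"
  shows "real (steps_to (\<lambda>w. sr w (anc_node par x m)) (anc_node par x m) (anc_node par x l))
    \<le> c * log 2 (real (card M))"
proof -
  obtain k where k: "real k \<le> c * log 2 (real (card M))"
    "((\<lambda>w. sr w (anc_node par x m)) ^^ k) (anc_node par x l) = anc_node par x m"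
    using router_hop_count[OF anc_node_in_nodes[OF assms(1,2)] anc_node_in_nodes[OF assms(1,3)]
        same_light_anc_nodes[OF assms(4,5)]] by blast
  from steps_to_le[OF k(2)] k(1) show ?thesis by linarith
qed

lemma router_steps_to_less:
  assumes "x \<in> M" "l \<le> L" "m \<le> L" "l \<le> h_light" "m \<le> h_light" "l \<noteq> m"
  shows "steps_to (\<lambda>w. sr w (anc_node par x m)) (anc_node par x m) (sr (anc_node par x l) (anc_node par x m))
    < steps_to (\<lambda>w. sr w (anc_node par x m)) (anc_node par x m) (anc_node par x l)"
proof -
  obtain k where k: "((\<lambda>w. sr w (anc_node par x m)) ^^ k) (anc_node par x l) = anc_node par x m"
    using router_hop_count[OF anc_node_in_nodes[OF assms(1,2)] anc_node_in_nodes[OF assms(1,3)]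
        same_light_anc_nodes[OF assms(4,5)]] by blast
  have "anc_node par x l \<noteq> anc_node par x m" using assms(6) by (simp add: anc_node_eq_iff)
  from steps_to_less[OF k this] show ?thesis by simp
qed

end

definition route_guarantee ::
  "'a set \<Rightarrow> ('a \<Rightarrow> 'a \<Rightarrow> real) \<Rightarrow> (nat \<Rightarrow> 'a \<Rightarrow> 'a) \<Rightarrow> ('a node \<Rightarrow> 'a node \<Rightarrow> 'a node) \<Rightarrow>
   ('a node \<times> 'a node) set \<Rightarrow> ('a \<Rightarrow> 'a \<Rightarrow> real) \<Rightarrow> real \<Rightarrow> real \<Rightarrow> real \<Rightarrow> real \<Rightarrow> 'a \<Rightarrow> 'a \<Rightarrow> bool"
where
  "route_guarantee M d par sr S dt \<delta> \<gamma> \<epsilon> C p q \<longleftrightarrow>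
     (\<exists>m. snd (route_state M d par sr dt \<delta> \<gamma> p q m) = (0, q) \<and>
            (\<forall>j<m. snd (route_state M d par sr dt \<delta> \<gamma> p q (Suc j)) \<noteq> snd (route_state M d par sr dt \<delta> \<gamma> p q j)
                 \<longrightarrow> spanner_edge d par \<gamma> S (snd (route_state M d par sr dt \<delta> \<gamma> p q j))
                                             (snd (route_state M d par sr dt \<delta> \<gamma> p q (Suc j)))) \<and>
            real (card {j. j < m \<and> snd (route_state M d par sr dt \<delta> \<gamma> p q (Suc j)) \<noteq> snd (route_state M d par sr dt \<delta> \<gamma> p q j)})
              \<le> C * log 2 (real (card M)) \<and>
            (\<Sum>j<m. d (snd (snd (route_state M d par sr dt \<delta> \<gamma> p q j))) (snd (snd (route_state M d par sr dt \<delta> \<gamma> p q (Suc j)))))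
              \<le> (1 + \<epsilon>) * d p q)"

lemma route_guarantee_self:
  assumes "finite M" "metric_on M d" "q \<in> M" "0 \<le> C"
  shows "route_guarantee M d par sr S dt \<delta> \<gamma> \<epsilon> C q q"
proof -
  have "0 < card M" using assms(1,3) card_gt_0_iff by blast
  then have "0 \<le> C * log 2 (real (card M))" using assms(4) by simp
  moreover have "d q q = 0" using assms(2,3) unfolding metric_on_def by blast
  ultimately show ?thesis unfolding route_guarantee_def
    by (intro exI[of _ 0]) (simp add: route_state_def)
qed

locale routing = light_router M d N L par sr S c
  for M :: "'a set" and d N L par sr S c +
  fixes dt :: "'a \<Rightarrow> 'a \<Rightarrow> real" and p q :: 'a and \<epsilon> \<gamma> \<delta> :: real and K0 :: nat
  assumes gamma_gt_4: "\<gamma> > 4" and delta_pos: "\<delta> > 0" and c_pos: "c > 0"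
    and K0: "2 * ((1 + \<delta>) * (\<gamma> + 4)) / (\<gamma> - 4) < 2 ^ K0"
    and finite_M: "finite M" and labelling: "approx_labelling M d \<delta> dt"
    and gamma_good: "gamma_ok M d par \<gamma> \<epsilon>"
    and p_in: "p \<in> M" and q_in: "q \<in> M" and p_ne_q: "p \<noteq> q"
begin

lemma card_ge_2: "2 \<le> card M"
proof -
  have "card {p, q} \<le> card M" using p_in q_in finite_M by (intro card_mono) auto
  then show ?thesis using p_ne_q by simp
qed

lemma log_card_ge_1: "1 \<le> log 2 (real (card M))"
  using card_ge_2 by simp

lemma dist_pq_pos: "0 < d p q"
  using d_nonneg[OF p_in q_in] d_eq_0_iff[OF p_in q_in] p_ne_q by linarith

lemma dt_ge: "d p q \<le> dt p q" and dt_le: "dt p q \<le> (1 + \<delta>) * d p q"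
  using labelling p_in q_in unfolding approx_labelling_def by auto

definition cross_level :: nat where
  "cross_level = (LEAST i. d (up par 0 p i) (up par 0 q i) \<le> \<gamma> * 2 ^ i)"

lemma cross_level_exists: "d (up par 0 p L) (up par 0 q L) \<le> \<gamma> * 2 ^ L"
  using up_top_eq[OF p_in q_in] d_self[OF up_in_M[OF q_in order.refl]] gamma_gt_4 by simp

lemma cross_level_le_top: "cross_level \<le> L"
  unfolding cross_level_def by (rule Least_le) (rule cross_level_exists)

lemma cross_edge_at_cross_level: "d (up par 0 p cross_level) (up par 0 q cross_level) \<le> \<gamma> * 2 ^ cross_level"
  unfolding cross_level_def by (rule LeastI) (rule cross_level_exists)

lemma no_cross_edge_below: "l < cross_level \<Longrightarrow> \<gamma> * 2 ^ l < d (up par 0 p l) (up par 0 q l)"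
  unfolding cross_level_def using not_less_Least by fastforce

(* The router only compares levels with the target level, so truncating it at 0 is harmless. *)
definition target :: nat where
  "target = nat (target_level dt \<delta> \<gamma> p q)"

lemma target_bounds:
  shows "0 < target \<Longrightarrow> (1 + \<delta>) * (\<gamma> + 4) * 2 ^ target \<le> dt p q"
    and "dt p q < (1 + \<delta>) * (\<gamma> + 4) * 2 ^ Suc target"
proof -
  let ?a = "(1 + \<delta>) * (\<gamma> + 4)"
  have a: "0 < ?a" using delta_pos gamma_gt_4 by simp
  have x: "0 < dt p q / ?a" using a dist_pq_pos dt_ge by simp
  have t: "target = nat \<lfloor>log 2 (dt p q / ?a)\<rfloor>" by (simp add: target_def target_level_def)
  show "?a * 2 ^ target \<le> dt p q" if "0 < target"
  proof -
    have "0 \<le> \<lfloor>log 2 (dt p q / ?a)\<rfloor>" using that unfolding t by simp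
    from two_pow_nat_floor_log_le[OF x this] show ?thesis
      using a unfolding t by (simp add: pos_le_divide_eq mult.commute)
  qed
  show "dt p q < ?a * 2 ^ Suc target"
    using less_two_pow_Suc_nat_floor_log[OF x] a unfolding t by (simp add: pos_divide_less_eq mult.commute)
qed

lemma target_dist_lower:
  assumes "0 < target"
  shows "(\<gamma> + 4) * 2 ^ target \<le> d p q"
proof -
  have "(1 + \<delta>) * ((\<gamma> + 4) * 2 ^ target) \<le> (1 + \<delta>) * d p q"
    using target_bounds(1)[OF assms] dt_le by (simp add: mult.assoc)
  moreover have "0 < 1 + \<delta>" using delta_pos by simp
  ultimately show ?thesis by (simp add: mult_le_cancel_left_pos)
qed

lemma target_le_cross_level: "target \<le> cross_level"
proof (rule ccontr)
  let ?i = cross_level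
  assume "\<not> target \<le> ?i"
  then have lt: "?i < target" by simp
  have "(2::real) ^ ?i \<le> 2 ^ target" using lt by simp
  then have "(\<gamma> + 4) * 2 ^ ?i \<le> (\<gamma> + 4) * 2 ^ target" using gamma_gt_4 by simp
  also have "\<dots> \<le> d p q" using lt by (intro target_dist_lower) simp
  also have "\<dots> \<le> d (up par 0 p ?i) (up par 0 q ?i) + (4 * 2 ^ ?i - 4)"
    by (rule dist_le_dist_up[OF p_in q_in cross_level_le_top])
  also have "\<dots> \<le> \<gamma> * 2 ^ ?i + (4 * 2 ^ ?i - 4)" using cross_edge_at_cross_level by simp
  finally show False by (simp add: algebra_simps)
qed

(* At level j the ancestors of p and q are less than d(p,q) + 4 * 2^j apart, which is below
   gamma * 2^j once 2^j exceeds d(p,q) / (gamma - 4): this is where gamma > 4 is needed. *)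
lemma cross_level_le_target_plus: "cross_level \<le> target + K0"
proof (cases "L \<le> target + K0")
  case True
  then show ?thesis using cross_level_le_top by simp
next
  case False
  let ?j = "target + K0" and ?a = "(1 + \<delta>) * (\<gamma> + 4)"
  have "2 * ?a < (\<gamma> - 4) * 2 ^ K0" using K0 gamma_gt_4 by (simp add: pos_divide_less_eq mult.commute)
  have "dt p q < ?a * 2 ^ Suc target" by (rule target_bounds(2))
  also have "\<dots> = (2 * ?a) * 2 ^ target" by simp
  also have "\<dots> < ((\<gamma> - 4) * 2 ^ K0) * 2 ^ target"
    using \<open>2 * ?a < (\<gamma> - 4) * 2 ^ K0\<close> by (intro mult_strict_right_mono) auto
  also have "\<dots> = (\<gamma> - 4) * 2 ^ ?j" by (simp add: power_add)
  finally have "dt p q < (\<gamma> - 4) * 2 ^ ?j" .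
  moreover have "d (up par 0 p ?j) (up par 0 q ?j) \<le> d p q + (4 * 2 ^ ?j - 4)"
    using False by (intro dist_up_le_dist p_in q_in) simp
  ultimately have "d (up par 0 p ?j) (up par 0 q ?j) \<le> \<gamma> * 2 ^ ?j"
    using dt_ge by (simp add: algebra_simps)
  then show ?thesis unfolding cross_level_def by (rule Least_le)
qed

lemma target_le_light_level_plus_log: "real target \<le> real h_light + 1 + log 2 (real (card M))"
proof (cases "0 < target")
  case False
  then show ?thesis using log_card_ge_1 by simp
next
  case True
  let ?D = "diam M d" and ?n = "real (card M)" and ?a = "(1 + \<delta>) * (\<gamma> + 4)"
  have n: "2 \<le> ?n" using card_ge_2 by simp
  have "?a * 2 ^ target \<le> dt p q" by (rule target_bounds(1)[OF True])
  also have "\<dots> \<le> (1 + \<delta>) * d p q" by (rule dt_le)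
  also have "\<dots> \<le> ?a * ?D"
  proof -
    have "d p q \<le> (\<gamma> + 4) * d p q" using dist_pq_pos gamma_gt_4 by simp
    also have "\<dots> \<le> (\<gamma> + 4) * ?D" using dist_le_diam[OF finite_M p_in q_in] gamma_gt_4 by simp
    finally show ?thesis using delta_pos by (simp add: mult.assoc)
  qed
  finally have pow: "2 ^ target \<le> ?D" using delta_pos gamma_gt_4 by simp
  have "(0::real) < 2 ^ target" by simp
  with pow have D: "0 < ?D" by linarith
  with pow have "real target \<le> log 2 ?D" by (simp add: le_log_iff powr_realpow)
  have "log 2 ?D = log 2 (?D / ?n) + log 2 ?n" using D n by (simp add: log_divide_pos)
  also have "log 2 (?D / ?n) \<le> real h_light + 1"
    unfolding light_level_def by linarith
  finally show ?thesis using \<open>real target \<le> log 2 ?D\<close> by simp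
qed

definition route :: "phase \<times> 'a node \<Rightarrow> phase \<times> 'a node" where
  "route = route_step d par sr \<gamma> h_light (target_level dt \<delta> \<gamma> p q) q"

lemma route_state_eq: "route_state M d par sr dt \<delta> \<gamma> p q m = (route ^^ m) (Asc, anc_node par p 0)"
  by (simp add: route_state_def route_def anc_node_0)

lemma anc_p_ne_target: "anc_node par p l \<noteq> (0, q)"
  using p_ne_q by (cases l) (auto simp: anc_node_def)

lemma route_ascend: "l < target \<Longrightarrow>
    route (Asc, anc_node par p l) = (Asc, ascend_step par sr h_light (target_level dt \<delta> \<gamma> p q) (anc_node par p l))"
  using anc_p_ne_target[of l]
  by (simp add: route_def route_step_def target_def zless_nat_eq_int_zless)

lemma route_search:
  assumes "ph \<noteq> Desc" "ph = Asc \<Longrightarrow> target \<le> l"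
  shows "route (ph, anc_node par p l) =
    (if is_anc_of par q (anc_node par p l) then (Desc, descend_step par sr h_light q (anc_node par p l))
     else (Srch, search_step d par \<gamma> q (anc_node par p l)))"
  using anc_p_ne_target[of l] assms
  by (cases ph) (simp_all add: route_def route_step_def target_def zless_nat_eq_int_zless Let_def)

lemma route_descend: "0 < l \<Longrightarrow> route (Desc, anc_node par q l) = (Desc, descend_step par sr h_light q (anc_node par q l))"
  by (simp add: route_def route_step_def anc_node_def)

lemma route_search_at_q: "0 < l \<Longrightarrow> route (Srch, anc_node par q l) = (Desc, descend_step par sr h_light q (anc_node par q l))"
  by (simp add: route_def route_step_def anc_node_def is_anc_of_def)

definition light_goal :: nat where
  "light_goal = min target h_light"

(* The potential of a state is the length of the rest of the reference path of gamma_ok from the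
   current node; its rank bounds the number of hops still to come. *)
definition down_length :: "nat \<Rightarrow> real" where
  "down_length l = climb_length q 0 l"

definition up_length :: "nat \<Rightarrow> real" where
  "up_length l = climb_length p l cross_level + d (up par 0 p cross_level) (up par 0 q cross_level)
    + down_length cross_level"

definition down_hops :: "nat \<Rightarrow> nat" where
  "down_hops l = (if l \<le> h_light then steps_to (\<lambda>w. sr w (anc_node par q 0)) (anc_node par q 0) (anc_node par q l)
    else (l - h_light) + steps_to (\<lambda>w. sr w (anc_node par q 0)) (anc_node par q 0) (anc_node par q h_light))"

definition up_hops :: "phase \<Rightarrow> nat \<Rightarrow> nat" where
  "up_hops ph l = (if ph = Asc \<and> l < light_goal
      then steps_to (\<lambda>w. sr w (anc_node par p light_goal)) (anc_node par p light_goal) (anc_node par p l)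
        + (cross_level - light_goal)
      else cross_level - l) + 1 + down_hops cross_level"

definition on_p_chain :: "phase \<times> 'a node \<Rightarrow> bool" where
  "on_p_chain s \<longleftrightarrow> fst s \<noteq> Desc \<and> snd s = anc_node par p (fst (snd s))"

definition potential :: "phase \<times> 'a node \<Rightarrow> real" where
  "potential s = (if on_p_chain s then up_length (fst (snd s)) else down_length (fst (snd s)))"

definition rank :: "phase \<times> 'a node \<Rightarrow> nat" where
  "rank s = (if on_p_chain s then up_hops (fst s) (fst (snd s)) else down_hops (fst (snd s)))"

definition route_inv :: "phase \<times> 'a node \<Rightarrow> bool" where
  "route_inv s \<longleftrightarrow> (\<exists>l \<le> target. s = (Asc, anc_node par p l)) \<or>
     (\<exists>l \<le> cross_level. s = (Srch, anc_node par p l)) \<or>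
     (s = (Srch, anc_node par q cross_level) \<and> up par 0 p cross_level \<noteq> up par 0 q cross_level) \<or>
     (\<exists>l \<le> cross_level. s = (Desc, anc_node par q l))"

lemma route_inv_asc: "l \<le> target \<Longrightarrow> route_inv (Asc, anc_node par p l)"
  and route_inv_search: "l \<le> cross_level \<Longrightarrow> route_inv (Srch, anc_node par p l)"
  and route_inv_desc: "l \<le> cross_level \<Longrightarrow> route_inv (Desc, anc_node par q l)"
  unfolding route_inv_def by blast+

definition progress :: "phase \<times> 'a node \<Rightarrow> phase \<times> 'a node \<Rightarrow> bool" where
  "progress s s' \<longleftrightarrow> route_inv s' \<and> rank s' < rank s \<and>
     d (snd (snd s)) (snd (snd s')) \<le> potential s - potential s' \<and>
     snd s' \<noteq> snd s \<and> spanner_edge d par \<gamma> S (snd s) (snd s')"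

lemma light_goal_le: "light_goal \<le> target" "light_goal \<le> h_light" "light_goal \<le> cross_level"
  using target_le_cross_level by (auto simp: light_goal_def)

lemma rank_p_chain: "ph \<noteq> Desc \<Longrightarrow> rank (ph, anc_node par p l) = up_hops ph l"
  and potential_p_chain: "ph \<noteq> Desc \<Longrightarrow> potential (ph, anc_node par p l) = up_length l"
  by (simp_all add: rank_def potential_def on_p_chain_def)

lemma rank_off_p_chain: "\<not> on_p_chain (ph, anc_node par q l) \<Longrightarrow> rank (ph, anc_node par q l) = down_hops l"
  and potential_off_p_chain: "\<not> on_p_chain (ph, anc_node par q l) \<Longrightarrow> potential (ph, anc_node par q l) = down_length l"
  by (simp_all add: rank_def potential_def)

lemma dist_down_le: "l' \<le> l \<Longrightarrow> l \<le> L \<Longrightarrow>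
    d (up par 0 q l) (up par 0 q l') \<le> down_length l - down_length l'"
  using dist_up_le_climb_length[OF q_in, of l' l] d_sym[OF up_in_M[OF q_in] up_in_M[OF q_in], of l l']
  by (simp add: down_length_def climb_length_split[of 0 l' l])

lemma dist_up_le: "l \<le> j \<Longrightarrow> j \<le> cross_level \<Longrightarrow>
    d (up par 0 p l) (up par 0 p j) \<le> up_length l - up_length j"
  using dist_up_le_climb_length[OF p_in, of l j] cross_level_le_top
  by (simp add: up_length_def climb_length_split[of l j cross_level])

lemma descend_step_light:
  assumes "0 < l" "l \<le> cross_level" "l \<le> h_light"
  obtains l' where "l' < l" "descend_step par sr h_light q (anc_node par q l) = anc_node par q l'"
    "down_hops l' < down_hops l" "spanner_edge d par \<gamma> S (anc_node par q l) (anc_node par q l')"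
proof -
  have l: "l \<le> L" using assms(2) cross_level_le_top by simp
  obtain j where j: "sr (anc_node par q l) (anc_node par q 0) = anc_node par q j" "j \<le> l" "j \<noteq> l"
      "spanner_edge d par \<gamma> S (anc_node par q l) (anc_node par q j)"
    using router_step_on_chain[OF q_in l _ assms(3), of 0] assms(1) by auto
  have "down_hops j < down_hops l"
    using router_steps_to_less[OF q_in l _ assms(3), of 0] assms(1,3) j(1-3) by (simp add: down_hops_def)
  moreover have "descend_step par sr h_light q (anc_node par q l) = anc_node par q j"
    using assms(3) j(1) by (simp add: descend_step_def anc_node_0)
  ultimately show ?thesis using that[of j] j(2-4) by simp
qed

lemma descend_step_heavy:
  assumes "h_light < l"
  shows "descend_step par sr h_light q (anc_node par q l) = anc_node par q (l - 1)"
    and "down_hops (l - 1) < down_hops l"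
proof -
  show "descend_step par sr h_light q (anc_node par q l) = anc_node par q (l - 1)"
    using assms by (simp add: descend_step_def anc_node_def)
  show "down_hops (l - 1) < down_hops l"
  proof (cases "l - 1 \<le> h_light")
    case True
    then have "l - 1 = h_light" using assms by simp
    then show ?thesis using assms by (simp add: down_hops_def)
  next
    case False
    then show ?thesis using assms by (simp add: down_hops_def)
  qed
qed

lemma descend_step_on_q_chain:
  assumes "0 < l" "l \<le> cross_level"
  obtains l' where "l' < l" "descend_step par sr h_light q (anc_node par q l) = anc_node par q l'"
    "down_hops l' < down_hops l" "spanner_edge d par \<gamma> S (anc_node par q l) (anc_node par q l')"
proof (cases "l \<le> h_light")
  case True
  with descend_step_light[OF assms] that show ?thesis by blast
next
  case False
  have "spanner_edge d par \<gamma> S (anc_node par q l) (anc_node par q (l - 1))"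
    using spanner_edge_anc_node_Suc(2)[of d par \<gamma> S q "l - 1"] assms(1) by simp
  with that[of "l - 1"] descend_step_heavy[of l] False assms(1) show ?thesis by simp
qed

lemma progress_descend:
  assumes "0 < l" "l \<le> cross_level" "\<not> on_p_chain (ph, anc_node par q l)"
    and "route (ph, anc_node par q l) = (Desc, descend_step par sr h_light q (anc_node par q l))"
  shows "progress (ph, anc_node par q l) (route (ph, anc_node par q l))"
proof -
  obtain l' where l': "l' < l" "descend_step par sr h_light q (anc_node par q l) = anc_node par q l'"
    "down_hops l' < down_hops l" "spanner_edge d par \<gamma> S (anc_node par q l) (anc_node par q l')"
    using descend_step_on_q_chain[OF assms(1,2)] by blast
  have off: "\<not> on_p_chain (Desc, anc_node par q l')" by (simp add: on_p_chain_def)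
  have "d (up par 0 q l) (up par 0 q l') \<le> down_length l - down_length l'"
    using l'(1) assms(2) cross_level_le_top by (intro dist_down_le) auto
  moreover have "route_inv (Desc, anc_node par q l')" using l'(1) assms(2) by (intro route_inv_desc) simp
  moreover have "anc_node par q l' \<noteq> anc_node par q l" using l'(1) by (simp add: anc_node_eq_iff)
  ultimately show ?thesis unfolding assms(4) l'(2) progress_def
    using l'(3,4) rank_off_p_chain[OF assms(3)] potential_off_p_chain[OF assms(3)]
      rank_off_p_chain[OF off] potential_off_p_chain[OF off] by simp
qed

lemma progress_ascend_light:
  assumes "l < light_goal"
  shows "progress (Asc, anc_node par p l) (route (Asc, anc_node par p l))"
proof -
  have lh: "l < h_light" and lL: "l \<le> L" "light_goal \<le> L" and ne: "l \<noteq> light_goal"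
    using assms light_goal_le cross_level_le_top by auto
  note chain = p_in lL less_imp_le[OF lh] light_goal_le(2) ne
  obtain j where j: "sr (anc_node par p l) (anc_node par p light_goal) = anc_node par p j"
      "min l light_goal \<le> j" "j \<le> max l light_goal" "j \<noteq> l"
      "spanner_edge d par \<gamma> S (anc_node par p l) (anc_node par p j)"
    using router_step_on_chain[OF chain] by blast
  have "route (Asc, anc_node par p l) = (Asc, anc_node par p j)"
    using route_ascend[of l] assms lh light_goal_le(1) j(1)
    by (simp add: ascend_step_def Let_def light_goal_def target_def anc_node_def up_0_add)
  moreover have "up_hops Asc j < up_hops Asc l"
    using router_steps_to_less[OF chain] assms j(1-4) by (simp add: up_hops_def)
  moreover have "d (up par 0 p l) (up par 0 p j) \<le> up_length l - up_length j"
    using j(2,3) assms light_goal_le(3) by (intro dist_up_le) auto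
  moreover have "route_inv (Asc, anc_node par p j)"
    using j(3) assms light_goal_le(1) by (intro route_inv_asc) simp
  moreover have "anc_node par p j \<noteq> anc_node par p l" using j(4) by (simp add: anc_node_eq_iff)
  ultimately show ?thesis unfolding progress_def using j(5) by (simp add: rank_p_chain potential_p_chain)
qed

lemma progress_ascend_tree:
  assumes "h_light \<le> l" "l < target"
  shows "progress (Asc, anc_node par p l) (route (Asc, anc_node par p l))"
proof -
  have l: "l < cross_level" using assms target_le_cross_level by simp
  have "route (Asc, anc_node par p l) = (Asc, anc_node par p (Suc l))"
    using route_ascend[OF assms(2)] assms(1) by (simp add: ascend_step_def parent_node_anc_node)
  moreover have "up_hops Asc (Suc l) < up_hops Asc l"
    using assms l light_goal_le(2) by (simp add: up_hops_def)
  moreover have "d (up par 0 p l) (up par 0 p (Suc l)) \<le> up_length l - up_length (Suc l)"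
    using l by (intro dist_up_le) auto
  moreover have "route_inv (Asc, anc_node par p (Suc l))" using assms(2) by (intro route_inv_asc) simp
  moreover have "anc_node par p (Suc l) \<noteq> anc_node par p l" by (simp add: anc_node_eq_iff)
  ultimately show ?thesis unfolding progress_def
    by (simp add: rank_p_chain potential_p_chain spanner_edge_anc_node_Suc)
qed

lemma up_hops_search: "ph \<noteq> Desc \<Longrightarrow> (ph = Asc \<Longrightarrow> target \<le> l) \<Longrightarrow>
    up_hops ph l = cross_level - l + 1 + down_hops cross_level"
  using light_goal_le(1) by (cases ph) (auto simp: up_hops_def)

lemma progress_search_below:
  assumes "ph \<noteq> Desc" "ph = Asc \<Longrightarrow> target \<le> l" "l < cross_level"
  shows "progress (ph, anc_node par p l) (route (ph, anc_node par p l))"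
proof -
  have far: "\<gamma> * 2 ^ l < d (up par 0 p l) (up par 0 q l)" by (rule no_cross_edge_below[OF assms(3)])
  moreover have "0 < \<gamma> * 2 ^ l" using gamma_gt_4 by simp
  ultimately have "up par 0 p l \<noteq> up par 0 q l"
    using d_self[OF up_in_M[OF q_in, of l]] assms(3) cross_level_le_top by auto
  then have "route (ph, anc_node par p l) = (Srch, anc_node par p (Suc l))"
    using route_search[OF assms(1,2)] far
    by (simp add: is_anc_of_def search_step_def cross_edge_def parent_node_def anc_node_def)
  moreover have "up_hops Srch (Suc l) < up_hops ph l"
    using up_hops_search[OF assms(1,2)] up_hops_search[of Srch "Suc l"] assms(3) by simp
  moreover have "d (up par 0 p l) (up par 0 p (Suc l)) \<le> up_length l - up_length (Suc l)"
    using assms(3) by (intro dist_up_le) auto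
  moreover have "route_inv (Srch, anc_node par p (Suc l))" using assms(3) by (intro route_inv_search) simp
  moreover have "anc_node par p (Suc l) \<noteq> anc_node par p l" by (simp add: anc_node_eq_iff)
  ultimately show ?thesis unfolding progress_def
    using assms(1) by (simp add: rank_p_chain potential_p_chain spanner_edge_anc_node_Suc)
qed

lemma progress_search_meet:
  assumes "ph \<noteq> Desc" "ph = Asc \<Longrightarrow> target \<le> cross_level"
    and meet: "up par 0 p cross_level = up par 0 q cross_level"
  shows "progress (ph, anc_node par p cross_level) (route (ph, anc_node par p cross_level))"
proof -
  let ?i = cross_level
  have pq: "anc_node par p ?i = anc_node par q ?i" using meet by (simp add: anc_node_eq_iff)
  have "0 < ?i" using meet p_ne_q by (cases ?i) auto
  then obtain l' where l': "l' < ?i" "descend_step par sr h_light q (anc_node par q ?i) = anc_node par q l'"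
      "down_hops l' < down_hops ?i" "spanner_edge d par \<gamma> S (anc_node par q ?i) (anc_node par q l')"
    using descend_step_on_q_chain by blast
  have off: "\<not> on_p_chain (Desc, anc_node par q l')" by (simp add: on_p_chain_def)
  have "route (ph, anc_node par p ?i) = (Desc, anc_node par q l')"
    using route_search[OF assms(1,2)] l'(2) pq by (simp add: is_anc_of_def)
  moreover have "rank (ph, anc_node par p ?i) = Suc (down_hops ?i)"
    using rank_p_chain[OF assms(1)] up_hops_search[OF assms(1,2)] by simp
  moreover have "potential (ph, anc_node par p ?i) = down_length ?i"
    using potential_p_chain[OF assms(1)] meet d_self[OF up_in_M[OF q_in cross_level_le_top]]
    by (simp add: up_length_def climb_length_def)
  moreover have "d (up par 0 p ?i) (up par 0 q l') \<le> down_length ?i - down_length l'"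
    using meet l'(1) cross_level_le_top by (simp add: dist_down_le)
  moreover have "route_inv (Desc, anc_node par q l')" using l'(1) by (intro route_inv_desc) simp
  moreover have "anc_node par q l' \<noteq> anc_node par p ?i" using l'(1) by (simp add: anc_node_eq_iff)
  moreover have "spanner_edge d par \<gamma> S (anc_node par p ?i) (anc_node par q l')" using l'(4) pq by simp
  ultimately show ?thesis unfolding progress_def
    using l'(3) rank_off_p_chain[OF off] potential_off_p_chain[OF off] by simp
qed

lemma progress_search_cross:
  assumes "ph \<noteq> Desc" "ph = Asc \<Longrightarrow> target \<le> cross_level"
    and apart: "up par 0 p cross_level \<noteq> up par 0 q cross_level"
  shows "progress (ph, anc_node par p cross_level) (route (ph, anc_node par p cross_level))"
proof -
  let ?i = cross_level
  have "cross_edge d \<gamma> (anc_node par p ?i) (anc_node par q ?i)"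
    using apart cross_edge_at_cross_level by (simp add: cross_edge_def anc_node_eq_iff)
  then have "route (ph, anc_node par p ?i) = (Srch, anc_node par q ?i)"
    and edge: "spanner_edge d par \<gamma> S (anc_node par p ?i) (anc_node par q ?i)"
    using route_search[OF assms(1,2)] apart
    by (simp_all add: is_anc_of_def search_step_def anc_node_def spanner_edge_def)
  moreover have off: "\<not> on_p_chain (Srch, anc_node par q ?i)"
    using apart by (simp add: on_p_chain_def anc_node_eq_iff)
  moreover have "route_inv (Srch, anc_node par q ?i)" using apart by (simp add: route_inv_def)
  moreover have "anc_node par q ?i \<noteq> anc_node par p ?i" using apart by (simp add: anc_node_eq_iff)
  ultimately show ?thesis unfolding progress_def
    using assms(1) edge up_hops_search[OF assms(1,2)]
    by (simp add: rank_p_chain potential_p_chain rank_off_p_chain potential_off_p_chain up_length_def climb_length_def)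
qed

lemma progress_search:
  assumes "ph \<noteq> Desc" "ph = Asc \<Longrightarrow> target \<le> l" "l \<le> cross_level"
  shows "progress (ph, anc_node par p l) (route (ph, anc_node par p l))"
proof (cases "l = cross_level")
  case True
  with assms show ?thesis
    by (cases "up par 0 p cross_level = up par 0 q cross_level")
      (simp_all add: progress_search_meet progress_search_cross)
next
  case False
  with assms show ?thesis by (intro progress_search_below) auto
qed

lemma route_progress:
  assumes "route_inv s" "snd s \<noteq> (0, q)"
  shows "progress s (route s)"
  using assms(1) unfolding route_inv_def
proof (elim disjE exE conjE)
  fix l assume s: "s = (Asc, anc_node par p l)" and l: "l \<le> target"
  show ?thesis unfolding s
  proof (cases "l < target")
    case True
    show "progress (Asc, anc_node par p l) (route (Asc, anc_node par p l))"
    proof (cases "l < light_goal")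
      case False
      then have "h_light \<le> l" using True by (simp add: light_goal_def)
      then show ?thesis using True by (rule progress_ascend_tree)
    qed (rule progress_ascend_light)
  next
    case False
    with l target_le_cross_level show "progress (Asc, anc_node par p l) (route (Asc, anc_node par p l))"
      by (intro progress_search) auto
  qed
next
  fix l assume s: "s = (Srch, anc_node par p l)" and l: "l \<le> cross_level"
  show ?thesis unfolding s using l by (intro progress_search) auto
next
  assume s: "s = (Srch, anc_node par q cross_level)" and apart: "up par 0 p cross_level \<noteq> up par 0 q cross_level"
  have "0 < cross_level" using assms(2) s by (cases cross_level) (auto simp: anc_node_def)
  moreover have "\<not> on_p_chain (Srch, anc_node par q cross_level)"
    using apart by (simp add: on_p_chain_def anc_node_eq_iff)
  ultimately show ?thesis unfolding s by (intro progress_descend route_search_at_q) auto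
next
  fix l assume s: "s = (Desc, anc_node par q l)" and l: "l \<le> cross_level"
  have "0 < l" using assms(2) s by (cases l) (auto simp: anc_node_def)
  moreover have "\<not> on_p_chain (Desc, anc_node par q l)" by (simp add: on_p_chain_def)
  ultimately show ?thesis unfolding s using l by (intro progress_descend route_descend) auto
qed

lemma potential_initial_le: "potential (Asc, anc_node par p 0) \<le> (1 + \<epsilon>) * d p q"
  using gamma_good p_in q_in unfolding gamma_ok_def Let_def
  by (simp add: potential_p_chain up_length_def down_length_def climb_length_def cross_level_def
      atLeast0LessThan)

lemma potential_at_target: "potential (ph, (0, q)) = 0"
proof -
  have "\<not> on_p_chain (ph, (0, q))" using anc_p_ne_target[of 0] by (simp add: on_p_chain_def)
  then show ?thesis by (simp add: potential_def down_length_def climb_length_def)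
qed

lemma down_hops_cross_level_le: "real (down_hops cross_level) \<le> real (cross_level - light_goal) + c * log 2 (real (card M))"
proof (cases "cross_level \<le> h_light")
  case True
  then show ?thesis using router_steps_to_le[of q cross_level 0] q_in cross_level_le_top
    by (simp add: down_hops_def)
next
  case False
  then have "cross_level - h_light \<le> cross_level - light_goal" using light_goal_le(2) by simp
  then show ?thesis using False router_steps_to_le[of q h_light 0] q_in cross_level_le_top
    by (simp add: down_hops_def)
qed

lemma cross_level_minus_light_goal_le: "real (cross_level - light_goal) \<le> real K0 + 1 + log 2 (real (card M))"
proof -
  have "real (cross_level - light_goal) \<le> real target + real K0 - real light_goal"
    using cross_level_le_target_plus light_goal_le(3) by (simp add: of_nat_diff)
  moreover have "real target - real light_goal \<le> 1 + log 2 (real (card M))"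
    using target_le_light_level_plus_log log_card_ge_1 by (simp add: light_goal_def min_def)
  ultimately show ?thesis by simp
qed

lemma rank_initial_le: "real (rank (Asc, anc_node par p 0)) \<le> (2 * c + 2 * real K0 + 5) * log 2 (real (card M))"
proof -
  let ?log = "log 2 (real (card M))"
  have "real (up_hops Asc 0) \<le> c * ?log + real (cross_level - light_goal) + 1 + real (down_hops cross_level)"
  proof (cases "0 < light_goal")
    case True
    then show ?thesis
      using router_steps_to_le[OF p_in _ _ _ light_goal_le(2), of 0] light_goal_le(3) cross_level_le_top
      by (simp add: up_hops_def)
  next
    case False
    then show ?thesis using c_pos log_card_ge_1 by (simp add: up_hops_def)
  qed
  also have "\<dots> \<le> (2 * c + 2 * real K0 + 5) * ?log"
    using down_hops_cross_level_le cross_level_minus_light_goal_le log_card_ge_1 mult_left_mono[OF log_card_ge_1, of "real K0"]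
    by (simp add: algebra_simps)
  finally show ?thesis by (simp add: rank_p_chain)
qed

lemma route_reaches_target: "route_guarantee M d par sr S dt \<delta> \<gamma> \<epsilon> (2 * c + 2 * real K0 + 5) p q"
proof -
  let ?s0 = "(Asc, anc_node par p 0)" and ?C = "2 * c + 2 * real K0 + 5"
  let ?moved = "\<lambda>j. snd ((route ^^ Suc j) ?s0) \<noteq> snd ((route ^^ j) ?s0)"
  have "route_inv ?s0" by (rule route_inv_asc) simp
  moreover have "route_inv (route s) \<and> rank (route s) < rank s \<and>
      d (snd (snd s)) (snd (snd (route s))) \<le> potential s - potential (route s) \<and>
      (snd (route s) \<noteq> snd s \<and> spanner_edge d par \<gamma> S (snd s) (snd (route s)))"
    if "route_inv s" "snd s \<noteq> (0, q)" for s
    using route_progress[OF that] unfolding progress_def by simp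
  ultimately obtain m where m: "m \<le> rank ?s0" "snd ((route ^^ m) ?s0) = (0, q)"
    "\<forall>j<m. ?moved j \<and> spanner_edge d par \<gamma> S (snd ((route ^^ j) ?s0)) (snd ((route ^^ Suc j) ?s0))"
    "(\<Sum>j<m. d (snd (snd ((route ^^ j) ?s0))) (snd (snd ((route ^^ Suc j) ?s0))))
       \<le> potential ?s0 - potential ((route ^^ m) ?s0)"
    using funpow_reaches_with_potential[of route_inv "\<lambda>s. snd s = (0, q)" route rank
        "\<lambda>s s'. d (snd (snd s)) (snd (snd s'))" potential
        "\<lambda>s s'. snd s' \<noteq> snd s \<and> spanner_edge d par \<gamma> S (snd s) (snd s')" ?s0]
    by blast
  have "card {j. j < m \<and> ?moved j} \<le> card {..<m}" by (intro card_mono) auto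
  then have "real (card {j. j < m \<and> ?moved j}) \<le> ?C * log 2 (real (card M))"
    using m(1) rank_initial_le by simp
  moreover have "potential ((route ^^ m) ?s0) = 0"
    using potential_at_target[of "fst ((route ^^ m) ?s0)"] m(2) by (metis prod.collapse)
  ultimately show ?thesis unfolding route_guarantee_def route_state_eq
    using m(2-4) potential_initial_le by (intro exI[of _ m]) auto
qed

end

theorem theorem5:
  fixes \<epsilon> \<gamma> \<delta> c :: real and dd :: nat
  assumes "\<epsilon> > 0" and "\<gamma> > 4" and "\<delta> > 0" and "c > 0"
  shows "\<exists>C::real. \<forall>(M::'a set) d N L par sr S dt p q.
     finite M \<and> metric_on M d \<and> min_dist_one M d \<and> doubling M d dd \<and>
     is_net_seq M d N L \<and> is_parent_fun N L d par \<and>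
     shortcut_set N L par (light_level M d) S \<and>
     spanner_router sr S N L par (light_level M d) c (card M) \<and>
     approx_labelling M d \<delta> dt \<and> gamma_ok M d par \<gamma> \<epsilon> \<and> p \<in> M \<and> q \<in> M
     \<longrightarrow> (\<exists>m. snd (route_state M d par sr dt \<delta> \<gamma> p q m) = (0, q) \<and>
            (\<forall>j<m. snd (route_state M d par sr dt \<delta> \<gamma> p q (Suc j)) \<noteq> snd (route_state M d par sr dt \<delta> \<gamma> p q j)
                 \<longrightarrow> spanner_edge d par \<gamma> S (snd (route_state M d par sr dt \<delta> \<gamma> p q j))
                                             (snd (route_state M d par sr dt \<delta> \<gamma> p q (Suc j)))) \<and>
            real (card {j. j < m \<and> snd (route_state M d par sr dt \<delta> \<gamma> p q (Suc j)) \<noteq> snd (route_state M d par sr dt \<delta> \<gamma> p q j)})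
              \<le> C * log 2 (real (card M)) \<and>
            (\<Sum>j<m. d (snd (snd (route_state M d par sr dt \<delta> \<gamma> p q j))) (snd (snd (route_state M d par sr dt \<delta> \<gamma> p q (Suc j)))))
              \<le> (1 + \<epsilon>) * d p q)"
proof -
  obtain K0 :: nat where K0: "2 * ((1 + \<delta>) * (\<gamma> + 4)) / (\<gamma> - 4) < 2 ^ K0"
    using real_arch_pow[of 2] by auto
  let ?C = "2 * c + 2 * real K0 + 5"
  (* The doubling dimension, the minimum distance, the shape of the shortcut set and \<epsilon> > 0
     only matter for building the spanner, not for routing on it. *)
  have "route_guarantee M d par sr S dt \<delta> \<gamma> \<epsilon> ?C p q"
    if "finite M" "metric_on M d" "is_net_seq M d N L" "is_parent_fun N L d par"
      "spanner_router sr S N L par (light_level M d) c (card M)" "approx_labelling M d \<delta> dt"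
      "gamma_ok M d par \<gamma> \<epsilon>" "p \<in> M" "q \<in> M"
    for M :: "'a set" and d N L par sr S dt p q
  proof (cases "p = q")
    case True
    then show ?thesis using that assms(4) unfolding True by (intro route_guarantee_self) auto
  next
    case False
    interpret routing M d N L par sr S c dt p q \<epsilon> \<gamma> \<delta> K0
      using that False assms K0 by unfold_locales auto
    show ?thesis by (rule route_reaches_target)
  qed
  then show ?thesis unfolding route_guarantee_def by blast
qed

end
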